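(* Let $d\ge4$ and let $u:I\times\mathbb{R}^d\to\mathbb{C}$ be a critical spherically symmetric maximal-lifespan solution of $(i\partial_t+\Delta)u=|u|^pu$ which satisfies $u\in L^\infty_t\dot H^{s_c}_x(I\times\mathbb{R}^d)$ and $N(t)\le1$ for all $t\in I$. Then for each $\theta>0$, $$\lim_{N\to\infty}\Big(\||\nabla|^{s_c}u_{\ge N}\|_{L^\infty_tL^2_x(I\times\mathbb{R}^d)}+\frac1{N^\theta}\||\nabla|^{\theta+s_c}u_{<N}\|_{L^\infty_tL^2_x(I\times\mathbb{R}^d)}\Big)=0.$$
   Context: Here $p>0$, $s_c:=\frac d2-\frac2p\in(0,\frac12)$; $u_{\ge N}=P_{\ge N}u$, $u_{<N}=P_{<N}u$ are Littlewood–Paley projections (multipliers $1-\varphi(\xi/N)$ and $\varphi(\xi/N)$, with $\varphi$ a radial bump supported in $|\xi|\le\frac{11}{10}$ and equal to $1$ on $|\xi|\le1$). For $A>0$, $\mathcal{SC}(A)$ means: every radial $u_0\in\dot H^{s_c}$ whose maximal-lifespan solution $u$ with $u(0)=u_0$ has $\sup_{t}\|u(t)\|_{\dot H^{s_c}}\le A$ is global with finite scattering size $S_{\mathbb{R}}(u)=\iint|u|^{\frac{(d+2)p}{2}}$. If $\mathcal{SC}(A)$ fails for some $A$, there is a critical value $A_c$ with $\mathcal{SC}(A)$ holding for $A<A_c$ and failing for $A>A_c$; a critical solution is a spherically symmetric maximal-lifespan solution with $\sup_t\|u(t)\|_{\dot H^{s_c}}\le A_c$ which is not global with finite scattering size.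 Such a solution is almost periodic modulo scaling: there are $N:I\to(0,\infty)$ and $C:(0,\infty)\to(0,\infty)$ such that for every $\eta>0$ and $t\in I$, $\int_{|x|\ge C(\eta)/N(t)}||\nabla|^{s_c}u(t,x)|^2dx+\int_{|\xi|\ge C(\eta)N(t)}|\xi|^{2s_c}|\hat u(t,\xi)|^2d\xi<\eta$. *)

theory Defs
  imports "HOL-Analysis.Analysis"
begin

definition dderiv :: "('a::real_normed_vector \<Rightarrow> 'b::real_normed_vector) \<Rightarrow> 'a \<Rightarrow> 'a \<Rightarrow> 'b" where
  "dderiv f v = (\<lambda>x. frechet_derivative f (at x) v)"

fun iter_dderiv :: "'a list \<Rightarrow> ('a::real_normed_vector \<Rightarrow> 'b::real_normed_vector) \<Rightarrow> 'a \<Rightarrow> 'b" where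
  "iter_dderiv [] f = f"
| "iter_dderiv (v # vs) f = dderiv (iter_dderiv vs f) v"

definition smooth_fun :: "('a::euclidean_space \<Rightarrow> 'b::real_normed_vector) \<Rightarrow> bool" where
  "smooth_fun f \<longleftrightarrow> (\<forall>vs x. iter_dderiv vs f differentiable (at x))"

definition tsupport :: "('a::real_normed_vector \<Rightarrow> 'b::zero) \<Rightarrow> 'a set" where
  "tsupport f = closure {x. f x \<noteq> 0}"

definition test_fun :: "('a::euclidean_space \<Rightarrow> 'b::real_normed_vector) \<Rightarrow> 'a set \<Rightarrow> bool" where
  "test_fun f S \<longleftrightarrow> smooth_fun f \<and> compact (tsupport f) \<and> tsupport f \<subseteq> S"

definition fourier :: "(real^'n \<Rightarrow> complex) \<Rightarrow> real^'n \<Rightarrow> complex" where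
  "fourier f \<xi> = (\<integral>x. cis (- 2 * pi * (x \<bullet> \<xi>)) * f x \<partial>lborel)"

text \<open>g is the (distributional) Fourier transform of f, tested against C_c-infinity functions:
  the pairing of f with the Fourier transform of a test function equals the pairing of g with it.\<close>
definition ft_rel :: "(real^'n \<Rightarrow> complex) \<Rightarrow> (real^'n \<Rightarrow> complex) \<Rightarrow> bool" where
  "ft_rel f g \<longleftrightarrow> f \<in> borel_measurable lborel \<and> g \<in> borel_measurable lborel \<and>
     (\<forall>\<psi>. test_fun \<psi> UNIV \<longrightarrow>
        integrable lborel (\<lambda>x. f x * fourier \<psi> x) \<and>
        integrable lborel (\<lambda>\<xi>. g \<xi> * \<psi> \<xi>) \<and>
        (\<integral>x. f x * fourier \<psi> x \<partial>lborel) = (\<integral>\<xi>. g \<xi> * \<psi> \<xi> \<partial>lborel))"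

definition fhat :: "(real^'n \<Rightarrow> complex) \<Rightarrow> real^'n \<Rightarrow> complex" where
  "fhat f = (SOME g. ft_rel f g)"

definition hs_mem :: "real \<Rightarrow> (real^'n \<Rightarrow> complex) \<Rightarrow> bool" where
  "hs_mem s f \<longleftrightarrow> (\<exists>g. ft_rel f g \<and>
      integrable lborel (\<lambda>\<xi>. norm \<xi> powr (2 * s) * (cmod (g \<xi>))\<^sup>2))"

text \<open>L2 norm of |nabla|^s applied to the Fourier multiplier m (Plancherel).\<close>
definition mult_norm :: "real \<Rightarrow> (real^'n \<Rightarrow> real) \<Rightarrow> (real^'n \<Rightarrow> complex) \<Rightarrow> real" where
  "mult_norm s m f = sqrt (\<integral>\<xi>. norm \<xi> powr (2 * s) * (m \<xi>)\<^sup>2 * (cmod (fhat f \<xi>))\<^sup>2 \<partial>lborel)"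

definition hs_norm :: "real \<Rightarrow> (real^'n \<Rightarrow> complex) \<Rightarrow> real" where
  "hs_norm s f = mult_norm s (\<lambda>_. 1) f"

text \<open>|nabla|^s f as an L2 function on physical space.\<close>
definition frac_grad :: "real \<Rightarrow> (real^'n \<Rightarrow> complex) \<Rightarrow> real^'n \<Rightarrow> complex" where
  "frac_grad s f = (SOME g. integrable lborel (\<lambda>x. (cmod (g x))\<^sup>2) \<and>
                       ft_rel g (\<lambda>\<xi>. complex_of_real (norm \<xi> powr s) * fhat f \<xi>))"

definition radial :: "(real^'n \<Rightarrow> 'b) \<Rightarrow> bool" where
  "radial f \<longleftrightarrow> (\<forall>x y. norm x = norm y \<longrightarrow> f x = f y)"

definition crit_reg :: "'n::finite itself \<Rightarrow> real \<Rightarrow> real" where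
  "crit_reg _ p = real CARD('n) / 2 - 2 / p"

definition laplacian :: "(real \<times> (real^'n) \<Rightarrow> complex) \<Rightarrow> real \<times> (real^'n) \<Rightarrow> complex" where
  "laplacian \<psi> = (\<lambda>z. \<Sum>i\<in>Basis. dderiv (dderiv \<psi> (0, i)) (0, i) z)"

definition spacetime :: "(real \<Rightarrow> real^'n \<Rightarrow> complex) \<Rightarrow> real \<times> (real^'n) \<Rightarrow> complex" where
  "spacetime u = (\<lambda>z. u (fst z) (snd z))"

definition scat_size :: "real \<Rightarrow> real set \<Rightarrow> (real \<Rightarrow> real^'n \<Rightarrow> complex) \<Rightarrow> ennreal" where
  "scat_size p I u = (\<integral>\<^sup>+ z. indicator (I \<times> UNIV) z *
       ennreal (cmod (spacetime u z) powr ((real CARD('n) + 2) * p / 2)) \<partial>lborel)"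

text \<open>Solution on a nonempty interval I: u in C_t Hdot^{s_c} and in the scattering space on
  compact subintervals, solving the equation in the sense of distributions.\<close>
definition nls_sol :: "real \<Rightarrow> real set \<Rightarrow> (real \<Rightarrow> real^'n \<Rightarrow> complex) \<Rightarrow> bool" where
  "nls_sol p I u \<longleftrightarrow> is_interval I \<and> I \<noteq> {} \<and>
     (\<forall>t\<in>I. hs_mem (crit_reg TYPE('n) p) (u t)) \<and>
     (\<forall>t\<in>I. ((\<lambda>s. hs_norm (crit_reg TYPE('n) p) (\<lambda>x. u s x - u t x)) \<longlongrightarrow> 0) (at t within I)) \<and>
     spacetime u \<in> borel_measurable lborel \<and>
     (\<forall>K. compact K \<and> K \<subseteq> I \<longrightarrow> scat_size p K u < \<infinity>) \<and>
     (\<forall>\<psi>. test_fun \<psi> (interior I \<times> UNIV) \<longrightarrow>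
        integrable lborel (\<lambda>z. spacetime u z * (- \<i> * dderiv \<psi> (1, 0) z + laplacian \<psi> z)) \<and>
        integrable lborel (\<lambda>z. complex_of_real (cmod (spacetime u z) powr p) * spacetime u z * \<psi> z) \<and>
        (\<integral>z. spacetime u z * (- \<i> * dderiv \<psi> (1, 0) z + laplacian \<psi> z) \<partial>lborel) =
        (\<integral>z. complex_of_real (cmod (spacetime u z) powr p) * spacetime u z * \<psi> z \<partial>lborel))"

definition max_sol :: "real \<Rightarrow> real set \<Rightarrow> (real \<Rightarrow> real^'n \<Rightarrow> complex) \<Rightarrow> bool" where
  "max_sol p I u \<longleftrightarrow> nls_sol p I u \<and>
     \<not> (\<exists>J v. I \<subset> J \<and> nls_sol p J v \<and> (\<forall>t\<in>I. AE x in lborel. v t x = u t x))"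

definition SC :: "'n::finite itself \<Rightarrow> real \<Rightarrow> real \<Rightarrow> bool" where
  "SC _ p A \<longleftrightarrow> (\<forall>I (u :: real \<Rightarrow> real^'n \<Rightarrow> complex).
      max_sol p I u \<and> 0 \<in> I \<and> radial (u 0) \<and>
      (\<forall>t\<in>I. hs_norm (crit_reg TYPE('n) p) (u t) \<le> A)
      \<longrightarrow> I = UNIV \<and> scat_size p UNIV u < \<infinity>)"

text \<open>Critical solution: A_c is the critical value (SC(A) for A < A_c, fails for A > A_c).\<close>
definition critical_sol :: "real \<Rightarrow> real set \<Rightarrow> (real \<Rightarrow> real^'n \<Rightarrow> complex) \<Rightarrow> bool" where
  "critical_sol p I u \<longleftrightarrow> (\<exists>Ac.
      (\<forall>A. 0 < A \<and> A < Ac \<longrightarrow> SC TYPE('n) p A) \<and> (\<forall>A. A > Ac \<longrightarrow> \<not> SC TYPE('n) p A) \<and>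
      max_sol p I u \<and> (\<forall>t\<in>I. radial (u t)) \<and>
      (\<forall>t\<in>I. hs_norm (crit_reg TYPE('n) p) (u t) \<le> Ac) \<and>
      \<not> (I = UNIV \<and> scat_size p UNIV u < \<infinity>))"

text \<open>Almost periodicity modulo scaling with frequency scale function N and compactness modulus C.\<close>
definition almost_periodic :: "real \<Rightarrow> real set \<Rightarrow> (real \<Rightarrow> real^'n \<Rightarrow> complex) \<Rightarrow>
    (real \<Rightarrow> real) \<Rightarrow> (real \<Rightarrow> real) \<Rightarrow> bool" where
  "almost_periodic s I u N C \<longleftrightarrow> (\<forall>t\<in>I. N t > 0) \<and> (\<forall>\<eta>>0. C \<eta> > 0) \<and>
     (\<forall>\<eta>>0. \<forall>t\<in>I.
        (LINT x:{x. norm x \<ge> C \<eta> / N t}|lborel. (cmod (frac_grad s (u t) x))\<^sup>2) +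
        (LINT \<xi>:{\<xi>. norm \<xi> \<ge> C \<eta> * N t}|lborel. norm \<xi> powr (2 * s) * (cmod (fhat (u t) \<xi>))\<^sup>2) < \<eta>)"

end

theory Submission
  imports Defs "HOL-Computational_Algebra.Polynomial"
begin

(* Since N(t) <= 1, almost periodicity yields for every eta a radius C(eta), independent of t,
   beyond which the frequency mass of |nabla|^s_c u(t) is below eta.  For M >= C(eta) the
   high-frequency part is controlled by this tail.  For the low-frequency part, the weight
   |xi/M|^theta is at most (C(eta)/M)^theta below C(eta) and at most 11/10 on the support of
   phi(./M), so M^-theta |||nabla|^(theta+s_c) u_<M|| is bounded by a multiple of
   ((C(eta)/M)^(2 theta) ||u||^2 + eta)^(1/2), which becomes small as M -> oo.
   Formally, the Fourier transform fhat is picked by Hilbert choice, so one also needs that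
   distributional Fourier transforms are unique almost everywhere; this is shown by testing
   against smooth bump functions that approximate indicators of boxes. *)

section \<open>Smooth bump functions\<close>

(* Derivatives of s \<mapsto> poly Q (1/s) * exp (-1/s) are of the same form and vanish as s -> 0+,
   so these functions glue smoothly with 0 on s <= 0. *)
definition flat_exp :: "real poly \<Rightarrow> real \<Rightarrow> real" where
  "flat_exp Q s = (if s > 0 then poly Q (1 / s) * exp (- (1 / s)) else 0)"

definition flat_exp_deriv_poly :: "real poly \<Rightarrow> real poly" where
  "flat_exp_deriv_poly Q = [:0, 0, 1:] * (Q - pderiv Q)"

lemma power_times_poly_over_exp_tendsto_0:
  "((\<lambda>y::real. y ^ k * poly Q y / exp y) \<longlongrightarrow> 0) at_top"
proof (induction Q arbitrary: k)
  case (pCons a Q)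
  have "((\<lambda>y. a * (y ^ k / exp y) + y ^ Suc k * poly Q y / exp y) \<longlongrightarrow> a * 0 + 0) at_top"
    by (intro tendsto_intros tendsto_power_div_exp_0 pCons)
  then show ?case by (simp add: algebra_simps add_divide_distrib)
qed simp

lemma flat_exp_has_real_derivative:
  "(flat_exp Q has_real_derivative flat_exp (flat_exp_deriv_poly Q) s) (at s)"
proof (cases s "0 :: real" rule: linorder_cases)
  case greater
  have "poly (pderiv Q) (1 / s) * (- 1 / s\<^sup>2) * exp (- (1 / s)) + poly Q (1 / s) * (exp (- (1 / s)) * (1 / s\<^sup>2))
      = flat_exp (flat_exp_deriv_poly Q) s"
    using greater unfolding flat_exp_def flat_exp_deriv_poly_def
    by (simp add: algebra_simps power2_eq_square divide_simps)
  moreover have "((\<lambda>s. poly Q (1 / s) * exp (- (1 / s))) has_real_derivative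
      poly (pderiv Q) (1 / s) * (- 1 / s\<^sup>2) * exp (- (1 / s)) + poly Q (1 / s) * (exp (- (1 / s)) * (1 / s\<^sup>2))) (at s)"
    using greater by (auto intro!: derivative_eq_intros simp: power2_eq_square field_simps)
  ultimately have "((\<lambda>s. poly Q (1 / s) * exp (- (1 / s))) has_real_derivative flat_exp (flat_exp_deriv_poly Q) s) (at s)"
    by simp
  from has_field_derivative_transform_within_open[OF this, of "{0<..}"]
  show ?thesis using greater by (simp add: flat_exp_def)
next
  case less
  from has_field_derivative_transform_within_open[OF DERIV_const[of 0 "at s"], of "{..<0}"]
  show ?thesis using less by (simp add: flat_exp_def)
next
  case equal
  have "((\<lambda>y. (flat_exp Q y - flat_exp Q 0) / (y - 0)) \<longlongrightarrow> 0) (at_right 0)"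
  proof -
    have "LIM y at_top. (flat_exp Q (inverse y) - flat_exp Q 0) / (inverse y - 0) :> nhds 0"
    proof (rule filterlim_cong[THEN iffD1, OF refl refl _ power_times_poly_over_exp_tendsto_0[of 1 Q]])
      show "\<forall>\<^sub>F y in at_top. y ^ 1 * poly Q y / exp y = (flat_exp Q (inverse y) - flat_exp Q 0) / (inverse y - 0)"
        using eventually_gt_at_top[of 0] by eventually_elim (simp add: flat_exp_def exp_minus field_simps)
    qed
    then show ?thesis unfolding filterlim_at_right_to_top .
  qed
  moreover have "((\<lambda>y. (flat_exp Q y - flat_exp Q 0) / (y - 0)) \<longlongrightarrow> 0) (at_left 0)"
    by (rule tendsto_eventually) (auto simp: flat_exp_def eventually_at_left_field intro!: exI[of _ "-1"])
  ultimately show ?thesis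
    using equal by (simp add: has_field_derivative_iff filterlim_at_split flat_exp_def)
qed

lemma flat_exp_smult: "flat_exp (smult a Q) s = a * flat_exp Q s"
  by (simp add: flat_exp_def)

inductive_set cutoff_algebra :: "(real^'n \<Rightarrow> complex) set" where
  flat_exp: "(\<lambda>x. complex_of_real (flat_exp Q (\<alpha> * (x $ i) + \<beta>))) \<in> cutoff_algebra"
| const: "(\<lambda>x. c) \<in> cutoff_algebra"
| add: "f \<in> cutoff_algebra \<Longrightarrow> g \<in> cutoff_algebra \<Longrightarrow> (\<lambda>x. f x + g x) \<in> cutoff_algebra"
| mult: "f \<in> cutoff_algebra \<Longrightarrow> g \<in> cutoff_algebra \<Longrightarrow> (\<lambda>x. f x * g x) \<in> cutoff_algebra"

lemma cutoff_algebra_has_derivative: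
  assumes "f \<in> cutoff_algebra"
  obtains f' where "\<And>x. (f has_derivative f' x) (at x)" and "\<And>v. (\<lambda>x. f' x v) \<in> cutoff_algebra"
  using assms
proof (induction arbitrary: thesis)
  case (flat_exp Q \<alpha> i \<beta>)
  let ?f' = "\<lambda>x v. complex_of_real (flat_exp (smult \<alpha> (flat_exp_deriv_poly Q)) (\<alpha> * (x $ i) + \<beta>)) * complex_of_real (v $ i)"
  have "((\<lambda>x. complex_of_real (flat_exp Q (\<alpha> * (x $ i) + \<beta>))) has_derivative ?f' x) (at x)" for x
  proof -
    have "((\<lambda>x. \<alpha> * (x $ i) + \<beta>) has_derivative (\<lambda>v. \<alpha> * (v $ i))) (at x)"
      by (auto intro!: derivative_eq_intros bounded_linear_imp_has_derivative)
    from has_derivative_of_real[OF has_derivative_compose[OF this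
          has_field_derivative_imp_has_derivative[OF flat_exp_has_real_derivative]]]
    show ?thesis by (simp add: flat_exp_smult algebra_simps)
  qed
  then show ?case by (rule flat_exp.prems) (intro cutoff_algebra.intros)
next
  case (const c)
  show ?case by (rule const.prems[of "\<lambda>x v. 0"]) (auto intro: cutoff_algebra.const)
next
  case (add f g)
  obtain f' g' where "\<And>x. (f has_derivative f' x) (at x)" "\<And>v. (\<lambda>x. f' x v) \<in> cutoff_algebra"
    and "\<And>x. (g has_derivative g' x) (at x)" "\<And>v. (\<lambda>x. g' x v) \<in> cutoff_algebra"
    using add.IH by metis
  then show ?case by (intro add.prems[of "\<lambda>x v. f' x v + g' x v"]) (auto intro!: has_derivative_add cutoff_algebra.add)
next
  case (mult f g)
  obtain f' g' where "\<And>x. (f has_derivative f' x) (at x)" "\<And>v. (\<lambda>x. f' x v) \<in> cutoff_algebra"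
    and "\<And>x. (g has_derivative g' x) (at x)" "\<And>v. (\<lambda>x. g' x v) \<in> cutoff_algebra"
    using mult.IH by metis
  then show ?case
    using mult.hyps
    by (intro mult.prems[of "\<lambda>x v. f x * g' x v + f' x v * g x"]) (auto intro!: has_derivative_mult cutoff_algebra.intros)
qed

lemma cutoff_algebra_dderiv: "f \<in> cutoff_algebra \<Longrightarrow> dderiv f v \<in> cutoff_algebra"
proof -
  assume "f \<in> cutoff_algebra"
  then obtain f' where "\<And>x. (f has_derivative f' x) (at x)" and "\<And>v. (\<lambda>x. f' x v) \<in> cutoff_algebra"
    by (metis cutoff_algebra_has_derivative)
  moreover from this(1) have "dderiv f v = (\<lambda>x. f' x v)"
    unfolding dderiv_def by (metis frechet_derivative_at)
  ultimately show ?thesis by simp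
qed

lemma cutoff_algebra_smooth: "f \<in> cutoff_algebra \<Longrightarrow> smooth_fun f"
proof -
  assume f: "f \<in> cutoff_algebra"
  have "iter_dderiv vs f \<in> cutoff_algebra" for vs
    by (induction vs) (auto intro: f cutoff_algebra_dderiv)
  then show ?thesis
    unfolding smooth_fun_def differentiable_def by (metis cutoff_algebra_has_derivative)
qed

lemma cutoff_algebra_prod:
  "finite S \<Longrightarrow> (\<And>i. i \<in> S \<Longrightarrow> f i \<in> cutoff_algebra) \<Longrightarrow> (\<lambda>x. \<Prod>i\<in>S. f i x) \<in> cutoff_algebra"
  by (induction S rule: finite_induct) (auto intro: cutoff_algebra.intros)

definition box_bump :: "real \<Rightarrow> real^'n \<Rightarrow> real^'n \<Rightarrow> real^'n \<Rightarrow> real" where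
  "box_bump k a b x = (\<Prod>i\<in>UNIV. flat_exp 1 (k * (x$i - a$i)) * flat_exp 1 (k * (b$i - x$i)))"

lemma flat_exp_1_nonneg: "0 \<le> flat_exp 1 s"
  and flat_exp_1_le_1: "flat_exp 1 s \<le> 1"
  by (simp_all add: flat_exp_def)

lemma box_bump_nonneg: "0 \<le> box_bump k a b x"
  unfolding box_bump_def by (intro prod_nonneg) (simp add: flat_exp_1_nonneg)

lemma box_bump_le_1: "box_bump k a b x \<le> 1"
  unfolding box_bump_def by (intro prod_le_1) (simp add: flat_exp_1_nonneg flat_exp_1_le_1 mult_le_one)

lemma box_bump_eq_0:
  assumes "k > 0" and "x \<notin> box a b"
  shows "box_bump k a b x = 0"
proof -
  from assms(2) obtain i where "x$i \<le> a$i \<or> b$i \<le> x$i" unfolding mem_box_cart by (auto simp: not_less)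
  with assms(1) have "flat_exp 1 (k * (x$i - a$i)) * flat_exp 1 (k * (b$i - x$i)) = 0"
    by (auto simp: flat_exp_def zero_less_mult_iff)
  then show ?thesis unfolding box_bump_def by (intro prod_zero) auto
qed

lemma box_bump_tendsto_indicator:
  "(\<lambda>n. box_bump (real (Suc n)) a b x) \<longlonglongrightarrow> indicator (box a b) x"
proof (cases "x \<in> box a b")
  case True
  have "(\<lambda>n. flat_exp 1 (real (Suc n) * c)) \<longlonglongrightarrow> 1" if "c > 0" for c
  proof -
    have "flat_exp 1 (real (Suc n) * c) = exp (- (inverse (real (Suc n)) / c))" for n
      using that by (simp add: flat_exp_def field_simps add_pos_nonneg)
    moreover have "(\<lambda>n. exp (- (inverse (real (Suc n)) / c))) \<longlonglongrightarrow> exp (- (0 / c))"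
      using that by (intro tendsto_intros LIMSEQ_inverse_real_of_nat) auto
    ultimately show ?thesis by simp
  qed
  with True have "(\<lambda>n. \<Prod>i\<in>UNIV. flat_exp 1 (real (Suc n) * (x$i - a$i)) * flat_exp 1 (real (Suc n) * (b$i - x$i)))
      \<longlonglongrightarrow> (\<Prod>i\<in>(UNIV::'a set). 1 * 1)"
    unfolding mem_box_cart by (intro tendsto_prod tendsto_mult) auto
  with True show ?thesis unfolding box_bump_def by simp
qed (simp add: box_bump_eq_0)

lemma box_bump_lower_bound:
  assumes "x \<in> cbox a b"
  shows "exp (-2) ^ CARD('n) \<le> box_bump 1 (\<chi> i. a$i - 1) (\<chi> i. b$i + 1) (x :: real^'n)"
proof -
  have "exp (-1) \<le> flat_exp 1 s" if "1 \<le> s" for s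
    using that by (simp add: flat_exp_def divide_le_eq_1)
  then have "exp (-1) * exp (-1) \<le> flat_exp 1 (x$i - (a$i - 1)) * flat_exp 1 (b$i + 1 - x$i)" for i
    using assms unfolding mem_box_cart by (intro mult_mono) (auto simp: flat_exp_1_nonneg)
  then have "(\<Prod>i\<in>(UNIV::'n set). exp (-2)) \<le> box_bump 1 (\<chi> i. a$i - 1) (\<chi> i. b$i + 1) x"
    unfolding box_bump_def by (intro prod_mono) (simp add: mult_exp_exp)
  then show ?thesis by simp
qed

lemma box_bump_test_fun:
  assumes "k > 0"
  shows "test_fun (\<lambda>x. complex_of_real (box_bump k a b x)) UNIV"
proof -
  have "(\<lambda>x. complex_of_real (flat_exp 1 (k * (x$i - a$i)))) \<in> cutoff_algebra"
    and "(\<lambda>x. complex_of_real (flat_exp 1 (k * (b$i - x$i)))) \<in> cutoff_algebra" for i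
    using cutoff_algebra.flat_exp[of 1 k i "- k * a$i"] cutoff_algebra.flat_exp[of 1 "- k" i "k * b$i"]
    by (simp_all add: algebra_simps)
  then have "(\<lambda>x. complex_of_real (box_bump k a b x)) \<in> cutoff_algebra"
    unfolding box_bump_def by (auto intro!: cutoff_algebra_prod cutoff_algebra.mult)
  moreover have "tsupport (\<lambda>x. complex_of_real (box_bump k a b x)) \<subseteq> cbox a b"
    unfolding tsupport_def using box_bump_eq_0[OF assms] box_subset_cbox[of a b]
    by (intro closure_minimal) auto
  ultimately show ?thesis
    unfolding test_fun_def tsupport_def
    by (metis cutoff_algebra_smooth compact_eq_bounded_closed bounded_subset bounded_cbox closed_closure subset_UNIV)
qed

section \<open>Uniqueness of the distributional Fourier transform\<close>

lemma Int_box: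
  fixes a :: "'a::euclidean_space"
  shows "box a b \<inter> box c d =
    box (\<Sum>i\<in>Basis. max (a\<bullet>i) (c\<bullet>i) *\<^sub>R i) (\<Sum>i\<in>Basis. min (b\<bullet>i) (d\<bullet>i) *\<^sub>R i)"
  unfolding set_eq_iff Int_iff mem_box by auto

lemma mem_centred_box:
  fixes x :: "'a::euclidean_space"
  assumes "norm x < r"
  shows "x \<in> box (- (r *\<^sub>R One)) (r *\<^sub>R One)"
  unfolding mem_box using assms Basis_le_norm[of _ x] by (fastforce simp: abs_less_iff)

lemma integral_eq_0_if_box_integrals_eq_0:
  fixes w :: "'a::euclidean_space \<Rightarrow> 'b::{banach, second_countable_topology}"
  assumes w: "integrable lborel w" and box: "\<And>a b. (LINT x:box a b|lborel. w x) = 0"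
  shows "integral\<^sup>L lborel w = 0"
proof -
  have "(\<lambda>n. LINT x:box (- (real n *\<^sub>R One)) (real n *\<^sub>R One)|lborel. w x) \<longlonglongrightarrow> integral\<^sup>L lborel w"
    unfolding set_lebesgue_integral_def
  proof (rule integral_dominated_convergence[where w = "\<lambda>x. norm (w x)"])
    show "AE x in lborel. (\<lambda>n. indicator (box (- (real n *\<^sub>R One)) (real n *\<^sub>R One)) x *\<^sub>R w x) \<longlonglongrightarrow> w x"
    proof (rule AE_I2, rule tendsto_eventually)
      fix x :: 'a
      obtain n0 :: nat where "norm x < real n0" using reals_Archimedean2 by blast
      then have "norm x < real n" if "n0 \<le> n" for n using that by linarith
      then show "\<forall>\<^sub>F n in sequentially. indicator (box (- (real n *\<^sub>R One)) (real n *\<^sub>R One)) x *\<^sub>R w x = w x"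
        unfolding eventually_sequentially by (auto simp: indicator_def intro!: exI[of _ n0] mem_centred_box)
    qed
  qed (use w in \<open>auto simp: indicator_def\<close>)
  then show ?thesis
    using box by (simp add: LIMSEQ_const_iff)
qed

lemma AE_eq_0_if_box_integrals_eq_0:
  fixes w :: "'a::euclidean_space \<Rightarrow> 'b::{banach, second_countable_topology}"
  assumes w: "integrable lborel w" and box: "\<And>a b. (LINT x:box a b|lborel. w x) = 0"
  shows "AE x in lborel. w x = 0"
proof (rule sigma_finite_measure.density_zero[OF sigma_finite_lborel w])
  let ?G = "range (\<lambda>(a, b). box a b :: 'a set)"
  have sets: "sets lborel = sigma_sets UNIV ?G"
    unfolding sets_lborel by (subst borel_eq_box) (simp add: sets_measure_of)
  have Int_stable: "Int_stable ?G"
    unfolding Int_stable_def by (auto simp: Int_box)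
  have subset_Pow: "?G \<subseteq> Pow UNIV" by simp
  fix A :: "'a set" assume "A \<in> sets lborel"
  then have "A \<in> sigma_sets UNIV ?G" unfolding sets .
  with Int_stable subset_Pow show "(LINT x:A|lborel. w x) = 0"
  proof (induction rule: sigma_sets_induct_disjoint)
    case (basic A)
    then show ?case using box by auto
  next
    case empty
    then show ?case by (simp add: set_lebesgue_integral_def)
  next
    case (compl A)
    have "A \<in> sets lborel" unfolding sets by (fact compl.hyps)
    then have "(LINT x:A \<union> (UNIV - A)|lborel. w x) = (LINT x:A|lborel. w x) + (LINT x:UNIV - A|lborel. w x)"
      using w by (intro set_integral_Un) (auto simp: set_integrable_def intro: integrable_mult_indicator)
    then show ?case
      using compl.IH integral_eq_0_if_box_integrals_eq_0[OF w box] set_integral_space[OF w] by simp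
  next
    case (union A)
    have "\<And>i. A i \<in> sets lborel" unfolding sets using union.hyps by auto
    with union show ?case
      using w
      by (subst lebesgue_integral_countable_add)
        (auto simp: disjoint_family_on_def set_integrable_def intro: integrable_mult_indicator)
  qed
qed

lemma AE_eq_0_if_local_box_integrals_eq_0:
  fixes w :: "'a::euclidean_space \<Rightarrow> 'b::{banach, second_countable_topology}"
  assumes int: "\<And>a b. set_integrable lborel (box a b) w"
    and box: "\<And>a b. (LINT x:box a b|lborel. w x) = 0"
  shows "AE x in lborel. w x = 0"
proof -
  have "AE x in lborel. indicator (box (- (r *\<^sub>R One)) (r *\<^sub>R One)) x *\<^sub>R w x = 0" for r :: real
  proof (rule AE_eq_0_if_box_integrals_eq_0)
    let ?K = "box (- (r *\<^sub>R One)) (r *\<^sub>R One) :: 'a set"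
    show "integrable lborel (\<lambda>x. indicator ?K x *\<^sub>R w x)"
      using int unfolding set_integrable_def .
    fix a b :: 'a
    obtain c d where cd: "box a b \<inter> ?K = box c d" by (simp add: Int_box)
    show "(LINT x:box a b|lborel. indicator ?K x *\<^sub>R w x) = 0"
      using box[of c d] unfolding set_lebesgue_integral_def cd[symmetric]
      by (simp add: indicator_inter_arith mult.commute)
  qed
  then have "AE x in lborel. \<forall>n::nat. indicator (box (- (real n *\<^sub>R One)) (real n *\<^sub>R One)) x *\<^sub>R w x = 0"
    by (subst AE_all_countable) blast
  then show ?thesis
  proof (rule AE_mp, intro AE_I2 impI)
    fix x :: 'a
    obtain n :: nat where "norm x < real n" using reals_Archimedean2 by blast
    then show "\<forall>n::nat. indicator (box (- (real n *\<^sub>R One)) (real n *\<^sub>R One)) x *\<^sub>R w x = 0 \<Longrightarrow> w x = 0"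
      by (metis mem_centred_box indicator_simps(1) scaleR_one)
  qed
qed

lemma set_integrable_cbox_if_test_fun_integrable:
  fixes w :: "real^'n \<Rightarrow> complex"
  assumes w: "w \<in> borel_measurable lborel"
    and test: "\<And>\<psi>. test_fun \<psi> UNIV \<Longrightarrow> integrable lborel (\<lambda>x. w x * \<psi> x)"
  shows "set_integrable lborel (cbox a b) w"
proof -
  define \<psi> where "\<psi> x = box_bump 1 (\<chi> i. a$i - 1) (\<chi> i. b$i + 1) x" for x
  define c :: real where "c = exp (-2) ^ CARD('n)"
  have c: "c > 0" unfolding c_def by simp
  have "integrable lborel (\<lambda>x. complex_of_real (1 / c) * (w x * complex_of_real (\<psi> x)))"
    unfolding \<psi>_def by (intro integrable_mult_right test box_bump_test_fun) simp
  then show ?thesis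
    unfolding set_integrable_def
  proof (rule Bochner_Integration.integrable_bound)
    show "(\<lambda>x. indicator (cbox a b) x *\<^sub>R w x) \<in> borel_measurable lborel" using w by simp
    show "AE x in lborel. norm (indicator (cbox a b) x *\<^sub>R w x) \<le> norm (complex_of_real (1 / c) * (w x * complex_of_real (\<psi> x)))"
    proof (rule AE_I2)
      fix x
      show "norm (indicator (cbox a b) x *\<^sub>R w x) \<le> norm (complex_of_real (1 / c) * (w x * complex_of_real (\<psi> x)))"
      proof (cases "x \<in> cbox a b")
        case True
        then have "1 \<le> \<psi> x / c" using box_bump_lower_bound[OF True] c by (simp add: \<psi>_def c_def)
        then have "norm (w x) * 1 \<le> norm (w x) * (\<psi> x / c)" by (intro mult_left_mono) auto
        moreover have "norm (complex_of_real (1 / c) * (w x * complex_of_real (\<psi> x))) = norm (w x) * (\<psi> x / c)"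
          using c by (simp add: \<psi>_def norm_mult norm_divide abs_of_nonneg[OF box_bump_nonneg])
        ultimately show ?thesis using True by simp
      qed simp
    qed
  qed
qed

lemma box_integral_eq_0_if_test_fun_integrals_eq_0:
  fixes w :: "real^'n \<Rightarrow> complex"
  assumes w: "w \<in> borel_measurable lborel"
    and test: "\<And>\<psi>. test_fun \<psi> UNIV \<Longrightarrow> integrable lborel (\<lambda>x. w x * \<psi> x) \<and> (\<integral>x. w x * \<psi> x \<partial>lborel) = 0"
  shows "(LINT x:box a b|lborel. w x) = 0"
proof -
  let ?s = "\<lambda>n x. w x * complex_of_real (box_bump (real (Suc n)) a b x)"
  have "(\<lambda>n. \<integral>x. ?s n x \<partial>lborel) \<longlonglongrightarrow> (LINT x:box a b|lborel. w x)"
    unfolding set_lebesgue_integral_def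
  proof (rule integral_dominated_convergence[where w = "\<lambda>x. norm (indicator (cbox a b) x *\<^sub>R w x)"])
    show "integrable lborel (\<lambda>x. norm (indicator (cbox a b) x *\<^sub>R w x))"
      using set_integrable_cbox_if_test_fun_integrable[OF w] test
      unfolding set_integrable_def by (intro integrable_norm) blast
    show "?s n \<in> borel_measurable lborel" for n
      using test[OF box_bump_test_fun[of "real (Suc n)" a b]] by (intro borel_measurable_integrable) simp
    show "AE x in lborel. (\<lambda>n. ?s n x) \<longlonglongrightarrow> indicator (box a b) x *\<^sub>R w x"
      using tendsto_mult[OF tendsto_const tendsto_of_real[OF box_bump_tendsto_indicator]]
      by (intro AE_I2) (simp add: scaleR_conv_of_real mult.commute)
    show "AE x in lborel. norm (?s n x) \<le> norm (indicator (cbox a b) x *\<^sub>R w x)" for n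
    proof (rule AE_I2)
      fix x
      show "norm (?s n x) \<le> norm (indicator (cbox a b) x *\<^sub>R w x)"
      proof (cases "x \<in> box a b")
        case True
        then have "x \<in> cbox a b" using box_subset_cbox by blast
        then show ?thesis
          by (simp add: norm_mult abs_of_nonneg[OF box_bump_nonneg] mult_left_le box_bump_le_1)
      qed (simp add: box_bump_eq_0)
    qed
  qed (use w in simp)
  moreover have "(\<integral>x. ?s n x \<partial>lborel) = 0" for n
    using test[OF box_bump_test_fun[of "real (Suc n)" a b]] by simp
  ultimately show ?thesis by (simp add: LIMSEQ_const_iff)
qed

lemma AE_eq_0_if_test_fun_integrals_eq_0:
  fixes w :: "real^'n \<Rightarrow> complex"
  assumes w: "w \<in> borel_measurable lborel"
    and test: "\<And>\<psi>. test_fun \<psi> UNIV \<Longrightarrow> integrable lborel (\<lambda>x. w x * \<psi> x) \<and> (\<integral>x. w x * \<psi> x \<partial>lborel) = 0"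
  shows "AE x in lborel. w x = 0"
proof (rule AE_eq_0_if_local_box_integrals_eq_0)
  fix a b :: "real^'n"
  have "set_integrable lborel (cbox a b) w"
    using w test by (blast intro: set_integrable_cbox_if_test_fun_integrable)
  then show "set_integrable lborel (box a b) w"
    by (rule set_integrable_subset) (auto simp: box_subset_cbox)
  show "(LINT x:box a b|lborel. w x) = 0"
    using w test by (rule box_integral_eq_0_if_test_fun_integrals_eq_0)
qed

lemma ft_rel_AE_unique:
  assumes "ft_rel f g" and "ft_rel f g'"
  shows "AE \<xi> in lborel. g \<xi> = g' \<xi>"
proof -
  have "AE \<xi> in lborel. g \<xi> - g' \<xi> = 0"
  proof (rule AE_eq_0_if_test_fun_integrals_eq_0)
    show "(\<lambda>\<xi>. g \<xi> - g' \<xi>) \<in> borel_measurable lborel"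
      using assms unfolding ft_rel_def by (auto intro: borel_measurable_diff)
    fix \<psi> :: "real^'a \<Rightarrow> complex" assume "test_fun \<psi> UNIV"
    with assms have "integrable lborel (\<lambda>\<xi>. g \<xi> * \<psi> \<xi>)" "integrable lborel (\<lambda>\<xi>. g' \<xi> * \<psi> \<xi>)"
      and "(\<integral>\<xi>. g \<xi> * \<psi> \<xi> \<partial>lborel) = (\<integral>\<xi>. g' \<xi> * \<psi> \<xi> \<partial>lborel)"
      unfolding ft_rel_def by metis+
    then show "integrable lborel (\<lambda>\<xi>. (g \<xi> - g' \<xi>) * \<psi> \<xi>) \<and> (\<integral>\<xi>. (g \<xi> - g' \<xi>) * \<psi> \<xi> \<partial>lborel) = 0"
      by (simp add: left_diff_distrib)
  qed
  then show ?thesis by simp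
qed

definition hs_density :: "real \<Rightarrow> (real^'n \<Rightarrow> complex) \<Rightarrow> real^'n \<Rightarrow> real" where
  "hs_density s f \<xi> = norm \<xi> powr (2 * s) * (cmod (fhat f \<xi>))\<^sup>2"

lemma hs_mem_imp_integrable_hs_density:
  assumes "hs_mem s f"
  shows "integrable lborel (hs_density s f)"
proof -
  obtain g where g: "ft_rel f g" and g_int: "integrable lborel (\<lambda>\<xi>. norm \<xi> powr (2 * s) * (cmod (g \<xi>))\<^sup>2)"
    using assms unfolding hs_mem_def by blast
  have fhat: "ft_rel f (fhat f)"
    unfolding fhat_def using g by (rule someI[of "ft_rel f"])
  then have [measurable]: "fhat f \<in> borel_measurable lborel"
    unfolding ft_rel_def by simp
  show ?thesis
    unfolding hs_density_def
  proof (rule integrable_cong_AE_imp[OF g_int])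
    show "AE \<xi> in lborel. norm \<xi> powr (2 * s) * (cmod (g \<xi>))\<^sup>2 = norm \<xi> powr (2 * s) * (cmod (fhat f \<xi>))\<^sup>2"
      using ft_rel_AE_unique[OF g fhat] by eventually_elim simp
  qed measurable
qed

section \<open>Frequency-localised Sobolev norms\<close>

lemma hs_density_nonneg: "0 \<le> hs_density s f \<xi>"
  by (simp add: hs_density_def)

lemma mult_norm_hs_density: "mult_norm s m f = sqrt (\<integral>\<xi>. (m \<xi>)\<^sup>2 * hs_density s f \<xi> \<partial>lborel)"
  unfolding mult_norm_def hs_density_def by (simp add: ac_simps)

lemma hs_norm_squared: "(hs_norm s f)\<^sup>2 = (\<integral>\<xi>. hs_density s f \<xi> \<partial>lborel)"
  unfolding hs_norm_def mult_norm_hs_density by (simp add: hs_density_nonneg)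

lemma high_freq_mult_norm_le:
  assumes int: "integrable lborel (hs_density s f)"
    and K: "\<And>\<xi>. \<bar>\<phi> \<xi>\<bar> \<le> K" and one: "\<And>\<xi>. norm \<xi> \<le> 1 \<Longrightarrow> \<phi> \<xi> = 1"
    and M: "0 < M" "R \<le> M"
    and tail: "(LINT \<xi>:{\<xi>. R \<le> norm \<xi>}|lborel. hs_density s f \<xi>) \<le> \<eta>"
  shows "mult_norm s (\<lambda>\<xi>. 1 - \<phi> ((1 / M) *\<^sub>R \<xi>)) f \<le> (1 + K) * sqrt \<eta>"
proof -
  let ?T = "{\<xi>::real^'a. R \<le> norm \<xi>}"
  have K0: "0 \<le> K" using K[of 0] by linarith
  have T_int: "integrable lborel (\<lambda>\<xi>. hs_density s f \<xi> * indicator ?T \<xi>)"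
    by (rule integrable_real_mult_indicator[OF _ int]) measurable
  have "(\<integral>\<xi>. (1 - \<phi> ((1 / M) *\<^sub>R \<xi>))\<^sup>2 * hs_density s f \<xi> \<partial>lborel)
      \<le> (\<integral>\<xi>. (1 + K)\<^sup>2 * (hs_density s f \<xi> * indicator ?T \<xi>) \<partial>lborel)"
  proof (rule integral_mono')
    show "integrable lborel (\<lambda>\<xi>. (1 + K)\<^sup>2 * (hs_density s f \<xi> * indicator ?T \<xi>))"
      using T_int by (rule integrable_mult_right)
    fix \<xi> :: "real^'a"
    show "(1 - \<phi> ((1 / M) *\<^sub>R \<xi>))\<^sup>2 * hs_density s f \<xi> \<le> (1 + K)\<^sup>2 * (hs_density s f \<xi> * indicator ?T \<xi>)"
    proof (cases "\<xi> \<in> ?T")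
      case True
      have "\<bar>1 - \<phi> ((1 / M) *\<^sub>R \<xi>)\<bar> \<le> 1 + K"
        using K[of "(1 / M) *\<^sub>R \<xi>"] by linarith
      then have "(1 - \<phi> ((1 / M) *\<^sub>R \<xi>))\<^sup>2 \<le> (1 + K)\<^sup>2"
        by (metis abs_le_square_iff abs_of_nonneg abs_ge_zero order_trans)
      with True show ?thesis by (simp add: mult_right_mono hs_density_nonneg)
    next
      case False
      then have "norm ((1 / M) *\<^sub>R \<xi>) \<le> 1" using M by (simp add: field_simps)
      with False show ?thesis by (simp add: one)
    qed
  qed (simp add: hs_density_nonneg)
  also have "\<dots> = (1 + K)\<^sup>2 * (LINT \<xi>:?T|lborel. hs_density s f \<xi>)"
    unfolding set_lebesgue_integral_def by (simp add: mult.commute)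
  also have "\<dots> \<le> (1 + K)\<^sup>2 * \<eta>"
    using tail by (intro mult_left_mono) auto
  finally have "sqrt (\<integral>\<xi>. (1 - \<phi> ((1 / M) *\<^sub>R \<xi>))\<^sup>2 * hs_density s f \<xi> \<partial>lborel) \<le> sqrt ((1 + K)\<^sup>2 * \<eta>)"
    by simp
  also have "\<dots> = (1 + K) * sqrt \<eta>"
    using K0 by (simp add: real_sqrt_mult)
  finally show ?thesis
    unfolding mult_norm_hs_density .
qed

lemma low_freq_weight_le:
  fixes \<phi> :: "real^'n \<Rightarrow> real"
  assumes K: "\<And>\<xi>. \<bar>\<phi> \<xi>\<bar> \<le> K" and supp: "\<And>\<xi>. \<rho> < norm \<xi> \<Longrightarrow> \<phi> \<xi> = 0"
    and M: "0 < M" and \<theta>: "0 \<le> \<theta>"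
  shows "(norm \<xi> / M) powr (2 * \<theta>) * (\<phi> ((1 / M) *\<^sub>R \<xi>))\<^sup>2
    \<le> K\<^sup>2 * ((R / M) powr (2 * \<theta>) + \<rho> powr (2 * \<theta>) * indicator {\<zeta>. R \<le> norm \<zeta>} \<xi>)"
proof -
  have \<phi>_sq: "(\<phi> ((1 / M) *\<^sub>R \<xi>))\<^sup>2 \<le> K\<^sup>2"
    using K[of "(1 / M) *\<^sub>R \<xi>"] by (metis abs_ge_zero power2_abs power_mono)
  consider "norm \<xi> < R" | "R \<le> norm \<xi>" "\<rho> < norm \<xi> / M" | "R \<le> norm \<xi>" "norm \<xi> / M \<le> \<rho>"
    by linarith
  then show ?thesis
  proof cases
    case 1
    then have "(norm \<xi> / M) powr (2 * \<theta>) \<le> (R / M) powr (2 * \<theta>)"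
      using M \<theta> by (intro powr_mono2 divide_right_mono) auto
    then have "(norm \<xi> / M) powr (2 * \<theta>) * (\<phi> ((1 / M) *\<^sub>R \<xi>))\<^sup>2 \<le> (R / M) powr (2 * \<theta>) * K\<^sup>2"
      using \<phi>_sq by (rule mult_mono) auto
    with 1 show ?thesis by (simp add: mult.commute)
  next
    case 2
    with M show ?thesis by (simp add: supp)
  next
    case 3
    then have "(norm \<xi> / M) powr (2 * \<theta>) \<le> \<rho> powr (2 * \<theta>)"
      using M \<theta> by (intro powr_mono2) auto
    then have "(norm \<xi> / M) powr (2 * \<theta>) * (\<phi> ((1 / M) *\<^sub>R \<xi>))\<^sup>2 \<le> \<rho> powr (2 * \<theta>) * K\<^sup>2"
      using \<phi>_sq by (rule mult_mono) auto
    moreover have "0 \<le> K\<^sup>2 * (R / M) powr (2 * \<theta>)" by simp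
    ultimately show ?thesis using 3 by (simp add: algebra_simps add_increasing2)
  qed
qed

lemma low_freq_mult_norm_le:
  assumes int: "integrable lborel (hs_density s f)"
    and K: "\<And>\<xi>. \<bar>\<phi> \<xi>\<bar> \<le> K" and supp: "\<And>\<xi>. \<rho> < norm \<xi> \<Longrightarrow> \<phi> \<xi> = 0"
    and M: "0 < M" and \<theta>: "0 \<le> \<theta>"
    and tail: "(LINT \<xi>:{\<xi>. R \<le> norm \<xi>}|lborel. hs_density s f \<xi>) \<le> \<eta>"
  shows "1 / M powr \<theta> * mult_norm (\<theta> + s) (\<lambda>\<xi>. \<phi> ((1 / M) *\<^sub>R \<xi>)) f
    \<le> K * sqrt ((R / M) powr (2 * \<theta>) * (hs_norm s f)\<^sup>2 + \<rho> powr (2 * \<theta>) * \<eta>)"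
proof -
  let ?T = "{\<xi>::real^'a. R \<le> norm \<xi>}"
  have K0: "0 \<le> K" using K[of 0] by linarith
  have T_int: "integrable lborel (\<lambda>\<xi>. hs_density s f \<xi> * indicator ?T \<xi>)"
    by (rule integrable_real_mult_indicator[OF _ int]) measurable
  have "(\<integral>\<xi>. (\<phi> ((1 / M) *\<^sub>R \<xi>))\<^sup>2 * hs_density (\<theta> + s) f \<xi> \<partial>lborel)
      = (\<integral>\<xi>. M powr (2 * \<theta>) * ((norm \<xi> / M) powr (2 * \<theta>) * (\<phi> ((1 / M) *\<^sub>R \<xi>))\<^sup>2 * hs_density s f \<xi>) \<partial>lborel)"
    using M by (simp add: hs_density_def powr_divide powr_add distrib_left ac_simps)
  also have "\<dots> \<le> (\<integral>\<xi>. M powr (2 * \<theta>) * K\<^sup>2 *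
      ((R / M) powr (2 * \<theta>) * hs_density s f \<xi> + \<rho> powr (2 * \<theta>) * (hs_density s f \<xi> * indicator ?T \<xi>)) \<partial>lborel)"
  proof (rule integral_mono')
    show "integrable lborel (\<lambda>\<xi>. M powr (2 * \<theta>) * K\<^sup>2 *
        ((R / M) powr (2 * \<theta>) * hs_density s f \<xi> + \<rho> powr (2 * \<theta>) * (hs_density s f \<xi> * indicator ?T \<xi>)))"
      using int T_int by (intro integrable_mult_right Bochner_Integration.integrable_add)
    fix \<xi> :: "real^'a"
    have "(norm \<xi> / M) powr (2 * \<theta>) * (\<phi> ((1 / M) *\<^sub>R \<xi>))\<^sup>2 * hs_density s f \<xi>
        \<le> K\<^sup>2 * ((R / M) powr (2 * \<theta>) + \<rho> powr (2 * \<theta>) * indicator ?T \<xi>) * hs_density s f \<xi>"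
      by (rule mult_right_mono[OF low_freq_weight_le[OF K supp M \<theta>] hs_density_nonneg])
    then have "M powr (2 * \<theta>) * ((norm \<xi> / M) powr (2 * \<theta>) * (\<phi> ((1 / M) *\<^sub>R \<xi>))\<^sup>2 * hs_density s f \<xi>)
        \<le> M powr (2 * \<theta>) * (K\<^sup>2 * ((R / M) powr (2 * \<theta>) + \<rho> powr (2 * \<theta>) * indicator ?T \<xi>) * hs_density s f \<xi>)"
      by (rule mult_left_mono) simp
    then show "M powr (2 * \<theta>) * ((norm \<xi> / M) powr (2 * \<theta>) * (\<phi> ((1 / M) *\<^sub>R \<xi>))\<^sup>2 * hs_density s f \<xi>)
        \<le> M powr (2 * \<theta>) * K\<^sup>2 * ((R / M) powr (2 * \<theta>) * hs_density s f \<xi> + \<rho> powr (2 * \<theta>) * (hs_density s f \<xi> * indicator ?T \<xi>))"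
      by (simp add: algebra_simps)
  qed (simp add: hs_density_nonneg)
  also have "\<dots> = M powr (2 * \<theta>) * K\<^sup>2 *
      ((R / M) powr (2 * \<theta>) * (hs_norm s f)\<^sup>2 + \<rho> powr (2 * \<theta>) * (LINT \<xi>:?T|lborel. hs_density s f \<xi>))"
    using int T_int unfolding set_lebesgue_integral_def hs_norm_squared by (simp add: mult.commute)
  also have "\<dots> \<le> M powr (2 * \<theta>) * K\<^sup>2 * ((R / M) powr (2 * \<theta>) * (hs_norm s f)\<^sup>2 + \<rho> powr (2 * \<theta>) * \<eta>)"
    using tail by (intro mult_left_mono add_left_mono) auto
  also have "M powr (2 * \<theta>) * K\<^sup>2 = (M powr \<theta> * K)\<^sup>2"
    by (simp add: power2_eq_square algebra_simps flip: powr_add)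
  finally have "sqrt (\<integral>\<xi>. (\<phi> ((1 / M) *\<^sub>R \<xi>))\<^sup>2 * hs_density (\<theta> + s) f \<xi> \<partial>lborel)
      \<le> sqrt ((M powr \<theta> * K)\<^sup>2 * ((R / M) powr (2 * \<theta>) * (hs_norm s f)\<^sup>2 + \<rho> powr (2 * \<theta>) * \<eta>))"
    by (rule real_sqrt_le_mono)
  also have "\<dots> = M powr \<theta> * K * sqrt ((R / M) powr (2 * \<theta>) * (hs_norm s f)\<^sup>2 + \<rho> powr (2 * \<theta>) * \<eta>)"
    using K0 by (simp add: real_sqrt_mult)
  finally show ?thesis
    unfolding mult_norm_hs_density using M by (simp add: field_simps)
qed

lemma tendsto_scaled_SUP_0:
  fixes f :: "'b \<Rightarrow> 'a \<Rightarrow> real"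
  assumes I: "I \<noteq> {}" and f_nonneg: "\<And>x t. t \<in> I \<Longrightarrow> 0 \<le> f x t"
    and c_pos: "eventually (\<lambda>x. 0 < c x) F"
    and small: "\<And>e. 0 < e \<Longrightarrow> eventually (\<lambda>x. \<forall>t\<in>I. c x * f x t \<le> e) F"
  shows "((\<lambda>x. c x * (SUP t\<in>I. f x t)) \<longlongrightarrow> 0) F"
proof -
  have SUP_le: "c x * (SUP t\<in>I. f x t) \<le> e" if "0 < c x" "\<forall>t\<in>I. c x * f x t \<le> e" for x e
  proof -
    have "(SUP t\<in>I. f x t) \<le> e / c x"
      using I that by (intro cSUP_least) (auto simp: field_simps)
    with that(1) show ?thesis by (simp add: field_simps)
  qed
  show ?thesis
  proof (rule order_tendstoI)
    fix a :: real
    assume "a < 0"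
    from c_pos small[OF zero_less_one] show "eventually (\<lambda>x. a < c x * (SUP t\<in>I. f x t)) F"
    proof eventually_elim
      case (elim x)
      obtain t where "t \<in> I" using I by blast
      have "bdd_above (f x ` I)"
        using elim by (intro bdd_aboveI[of _ "1 / c x"]) (auto simp: field_simps)
      then have "0 \<le> (SUP t\<in>I. f x t)"
        using \<open>t \<in> I\<close> f_nonneg by (intro cSUP_upper2) auto
      with elim have "0 \<le> c x * (SUP t\<in>I. f x t)" by simp
      with \<open>a < 0\<close> show ?case by linarith
    qed
  next
    fix a :: real
    assume "0 < a"
    then have "0 < a / 2" by simp
    from c_pos small[OF this] show "eventually (\<lambda>x. c x * (SUP t\<in>I. f x t) < a) F"
    proof eventually_elim
      case (elim x)
      with SUP_le[of x "a / 2"] \<open>0 < a\<close> show ?case by simp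
    qed
  qed
qed

lemma high_freq_SUP_tendsto_0:
  fixes f :: "'b \<Rightarrow> real^'n \<Rightarrow> complex"
  assumes I: "I \<noteq> {}" and int: "\<And>t. t \<in> I \<Longrightarrow> integrable lborel (hs_density s (f t))"
    and K: "\<And>\<xi>. \<bar>\<phi> \<xi>\<bar> \<le> K" and one: "\<And>\<xi>. norm \<xi> \<le> 1 \<Longrightarrow> \<phi> \<xi> = 1"
    and tail: "\<And>\<eta> t. 0 < \<eta> \<Longrightarrow> t \<in> I \<Longrightarrow> (LINT \<xi>:{\<xi>. R \<eta> \<le> norm \<xi>}|lborel. hs_density s (f t) \<xi>) \<le> \<eta>"
  shows "((\<lambda>M. SUP t\<in>I. mult_norm s (\<lambda>\<xi>. 1 - \<phi> ((1 / M) *\<^sub>R \<xi>)) (f t)) \<longlongrightarrow> 0) at_top"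
proof -
  have "((\<lambda>M. 1 * (SUP t\<in>I. mult_norm s (\<lambda>\<xi>. 1 - \<phi> ((1 / M) *\<^sub>R \<xi>)) (f t))) \<longlongrightarrow> 0) at_top"
  proof (rule tendsto_scaled_SUP_0[OF I])
    fix e :: real assume "0 < e"
    have K0: "0 \<le> K" using K[of 0] by linarith
    define \<eta> where "\<eta> = (e / (1 + K))\<^sup>2"
    have \<eta>: "0 < \<eta>" and e_eq: "(1 + K) * sqrt \<eta> = e"
      using \<open>0 < e\<close> K0 by (simp_all add: \<eta>_def)
    show "eventually (\<lambda>M. \<forall>t\<in>I. 1 * mult_norm s (\<lambda>\<xi>. 1 - \<phi> ((1 / M) *\<^sub>R \<xi>)) (f t) \<le> e) at_top"
      using eventually_ge_at_top[of "max 1 (R \<eta>)"]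
    proof eventually_elim
      case (elim M)
      show ?case
      proof
        fix t assume "t \<in> I"
        have "mult_norm s (\<lambda>\<xi>. 1 - \<phi> ((1 / M) *\<^sub>R \<xi>)) (f t) \<le> (1 + K) * sqrt \<eta>"
          using elim by (intro high_freq_mult_norm_le[OF int[OF \<open>t \<in> I\<close>] K one _ _ tail[OF \<eta> \<open>t \<in> I\<close>]]) auto
        with e_eq show "1 * mult_norm s (\<lambda>\<xi>. 1 - \<phi> ((1 / M) *\<^sub>R \<xi>)) (f t) \<le> e" by simp
      qed
    qed
  qed (simp_all add: mult_norm_def)
  then show ?thesis by simp
qed

lemma tendsto_powr_div_at_top_0:
  fixes c a :: real
  assumes "0 \<le> c" and "0 < a"
  shows "((\<lambda>M. (c / M) powr a) \<longlongrightarrow> 0) at_top"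
proof (rule tendsto_zero_powrI[OF _ tendsto_const])
  show "((\<lambda>M. c / M) \<longlongrightarrow> 0) at_top"
    by (intro tendsto_divide_0[OF tendsto_const] filterlim_at_top_imp_at_infinity filterlim_ident)
  show "eventually (\<lambda>M. 0 \<le> c / M) at_top"
    using eventually_gt_at_top[of 0] by eventually_elim (use assms in simp)
qed (use assms in simp)

lemma low_freq_SUP_tendsto_0:
  fixes f :: "'b \<Rightarrow> real^'n \<Rightarrow> complex"
  assumes I: "I \<noteq> {}" and int: "\<And>t. t \<in> I \<Longrightarrow> integrable lborel (hs_density s (f t))"
    and bdd: "\<And>t. t \<in> I \<Longrightarrow> hs_norm s (f t) \<le> B"
    and K: "\<And>\<xi>. \<bar>\<phi> \<xi>\<bar> \<le> K" and supp: "\<And>\<xi>. \<rho> < norm \<xi> \<Longrightarrow> \<phi> \<xi> = 0"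
    and \<theta>: "0 < \<theta>" and R: "\<And>\<eta>. 0 < \<eta> \<Longrightarrow> 0 \<le> R \<eta>"
    and tail: "\<And>\<eta> t. 0 < \<eta> \<Longrightarrow> t \<in> I \<Longrightarrow> (LINT \<xi>:{\<xi>. R \<eta> \<le> norm \<xi>}|lborel. hs_density s (f t) \<xi>) \<le> \<eta>"
  shows "((\<lambda>M. (1 / M powr \<theta>) * (SUP t\<in>I. mult_norm (\<theta> + s) (\<lambda>\<xi>. \<phi> ((1 / M) *\<^sub>R \<xi>)) (f t))) \<longlongrightarrow> 0) at_top"
proof (rule tendsto_scaled_SUP_0[OF I])
  fix e :: real assume "0 < e"
  have K0: "0 \<le> K" using K[of 0] by linarith
  define D where "D = \<rho> powr (2 * \<theta>)"
  define \<eta> where "\<eta> = (e / (1 + K))\<^sup>2 / (1 + D)"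
  have D: "0 \<le> D" by (simp add: D_def)
  have \<eta>: "0 < \<eta>" using \<open>0 < e\<close> K0 D by (simp add: \<eta>_def)
  have "K * sqrt ((1 + D) * \<eta>) = K * (e / (1 + K))"
    using \<open>0 < e\<close> K0 D by (simp add: \<eta>_def real_sqrt_divide)
  also have "\<dots> \<le> e"
    using \<open>0 < e\<close> K0 by (simp add: field_simps)
  finally have e_bound: "K * sqrt ((1 + D) * \<eta>) \<le> e" .
  have "((\<lambda>M. (R \<eta> / M) powr (2 * \<theta>) * B\<^sup>2) \<longlongrightarrow> 0) at_top"
    using R[OF \<eta>] \<theta> by (intro tendsto_mult_left_zero tendsto_powr_div_at_top_0) auto
  then have "eventually (\<lambda>M. (R \<eta> / M) powr (2 * \<theta>) * B\<^sup>2 < \<eta>) at_top"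
    using \<eta> by (rule order_tendstoD)
  with eventually_gt_at_top[of 0]
  show "eventually (\<lambda>M. \<forall>t\<in>I. 1 / M powr \<theta> * mult_norm (\<theta> + s) (\<lambda>\<xi>. \<phi> ((1 / M) *\<^sub>R \<xi>)) (f t) \<le> e) at_top"
  proof eventually_elim
    case (elim M)
    show ?case
    proof
      fix t assume "t \<in> I"
      have "0 \<le> hs_norm s (f t)" by (simp add: hs_norm_def mult_norm_def)
      then have "(hs_norm s (f t))\<^sup>2 \<le> B\<^sup>2"
        by (rule power_mono[OF bdd[OF \<open>t \<in> I\<close>]])
      then have "(R \<eta> / M) powr (2 * \<theta>) * (hs_norm s (f t))\<^sup>2 \<le> (R \<eta> / M) powr (2 * \<theta>) * B\<^sup>2"
        by (rule mult_left_mono) simp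
      with elim have "(R \<eta> / M) powr (2 * \<theta>) * (hs_norm s (f t))\<^sup>2 + D * \<eta> \<le> (1 + D) * \<eta>"
        by (simp add: ring_distribs)
      then have "K * sqrt ((R \<eta> / M) powr (2 * \<theta>) * (hs_norm s (f t))\<^sup>2 + D * \<eta>) \<le> K * sqrt ((1 + D) * \<eta>)"
        using K0 by (intro mult_left_mono real_sqrt_le_mono)
      moreover have "1 / M powr \<theta> * mult_norm (\<theta> + s) (\<lambda>\<xi>. \<phi> ((1 / M) *\<^sub>R \<xi>)) (f t)
          \<le> K * sqrt ((R \<eta> / M) powr (2 * \<theta>) * (hs_norm s (f t))\<^sup>2 + D * \<eta>)"
        unfolding D_def using elim \<theta>
        by (intro low_freq_mult_norm_le[OF int[OF \<open>t \<in> I\<close>] K supp _ _ tail[OF \<eta> \<open>t \<in> I\<close>]]) auto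
      ultimately show "1 / M powr \<theta> * mult_norm (\<theta> + s) (\<lambda>\<xi>. \<phi> ((1 / M) *\<^sub>R \<xi>)) (f t) \<le> e"
        using e_bound by linarith
    qed
  qed
qed (auto simp: mult_norm_def eventually_gt_at_top)

lemma smooth_fun_bounded:
  fixes \<phi> :: "'a::euclidean_space \<Rightarrow> real"
  assumes smooth: "smooth_fun \<phi>" and supp: "\<And>\<xi>. \<rho> < norm \<xi> \<Longrightarrow> \<phi> \<xi> = 0"
  obtains K where "\<And>\<xi>. \<bar>\<phi> \<xi>\<bar> \<le> K"
proof -
  have "\<phi> differentiable (at x)" for x
    using smooth unfolding smooth_fun_def by (metis iter_dderiv.simps(1))
  then have "continuous_on (cball 0 \<rho>) \<phi>"
    by (simp add: continuous_at_imp_continuous_on differentiable_imp_continuous_within)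
  then have "bounded (\<phi> ` cball 0 \<rho>)"
    by (intro compact_imp_bounded compact_continuous_image compact_cball)
  then obtain K where K: "\<forall>y\<in>\<phi> ` cball 0 \<rho>. \<bar>y\<bar> \<le> K"
    unfolding bounded_real by blast
  then have "\<bar>\<phi> \<xi>\<bar> \<le> max K 0" for \<xi>
  proof (cases "\<rho> < norm \<xi>")
    case False
    then have "\<xi> \<in> cball 0 \<rho>" by simp
    with K have "\<bar>\<phi> \<xi>\<bar> \<le> K" by blast
    then show ?thesis by simp
  qed (simp add: supp)
  then show ?thesis by (rule that)
qed

lemma almost_periodic_freq_tail_le:
  assumes ap: "almost_periodic s I u N C" and t: "t \<in> I" "N t \<le> 1" and \<eta>: "0 < \<eta>"
    and int: "integrable lborel (hs_density s (u t))"
  shows "(LINT \<xi>:{\<xi>. C \<eta> \<le> norm \<xi>}|lborel. hs_density s (u t) \<xi>) \<le> \<eta>"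
proof -
  have C: "0 < C \<eta>"
    using ap \<eta> t unfolding almost_periodic_def by auto
  have "(LINT x:{x. C \<eta> / N t \<le> norm x}|lborel. (cmod (frac_grad s (u t) x))\<^sup>2)
      + (LINT \<xi>:{\<xi>. C \<eta> * N t \<le> norm \<xi>}|lborel. hs_density s (u t) \<xi>) < \<eta>"
    using ap \<eta> t unfolding almost_periodic_def hs_density_def by auto
  moreover have "0 \<le> (LINT x:{x. C \<eta> / N t \<le> norm x}|lborel. (cmod (frac_grad s (u t) x))\<^sup>2)"
    unfolding set_lebesgue_integral_def by (simp add: Bochner_Integration.integral_nonneg)
  moreover have "(LINT \<xi>:{\<xi>. C \<eta> \<le> norm \<xi>}|lborel. hs_density s (u t) \<xi>)
      \<le> (LINT \<xi>:{\<xi>. C \<eta> * N t \<le> norm \<xi>}|lborel. hs_density s (u t) \<xi>)"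
  proof -
    have tail_int: "integrable lborel (\<lambda>\<xi>. indicator {\<xi>. R \<le> norm \<xi>} \<xi> *\<^sub>R hs_density s (u t) \<xi>)" for R
      by (rule integrable_mult_indicator[OF _ int]) measurable
    have "C \<eta> * N t \<le> C \<eta>" using C t(2) by (simp add: mult_left_le)
    then show ?thesis
      unfolding set_lebesgue_integral_def
      by (intro integral_mono[OF tail_int tail_int]) (simp add: indicator_def hs_density_nonneg)
  qed
  ultimately show ?thesis by linarith
qed

theorem lemma4p1:
  fixes p :: real and I :: "real set" and u :: "real \<Rightarrow> real^'n \<Rightarrow> complex"
    and N :: "real \<Rightarrow> real" and C :: "real \<Rightarrow> real" and \<phi> :: "real^'n \<Rightarrow> real"
  assumes d4: "CARD('n) \<ge> 4"
    and p_pos: "p > 0"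
    and sc_range: "0 < crit_reg TYPE('n) p" "crit_reg TYPE('n) p < 1/2"
    and \<phi>_smooth: "smooth_fun \<phi>" and \<phi>_radial: "radial \<phi>"
    and \<phi>_supp: "\<And>\<xi>. norm \<xi> > 11/10 \<Longrightarrow> \<phi> \<xi> = 0"
    and \<phi>_one: "\<And>\<xi>. norm \<xi> \<le> 1 \<Longrightarrow> \<phi> \<xi> = 1"
    and crit: "critical_sol p I u"
    and bdd: "\<exists>B. \<forall>t\<in>I. hs_norm (crit_reg TYPE('n) p) (u t) \<le> B"
    and ap: "almost_periodic (crit_reg TYPE('n) p) I u N C"
    and N_le: "\<And>t. t \<in> I \<Longrightarrow> N t \<le> 1"
  shows "\<forall>\<theta>>0. ((\<lambda>M. (SUP t\<in>I. mult_norm (crit_reg TYPE('n) p) (\<lambda>\<xi>. 1 - \<phi> ((1 / M) *\<^sub>R \<xi>)) (u t))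
              + (1 / M powr \<theta>) *
                (SUP t\<in>I. mult_norm (\<theta> + crit_reg TYPE('n) p) (\<lambda>\<xi>. \<phi> ((1 / M) *\<^sub>R \<xi>)) (u t)))
            \<longlongrightarrow> 0) at_top"
proof (intro allI impI)
  fix \<theta> :: real assume \<theta>: "0 < \<theta>"
  define s where "s = crit_reg TYPE('n) p"
  have I: "I \<noteq> {}" and hs_mem: "\<And>t. t \<in> I \<Longrightarrow> hs_mem s (u t)"
    using crit unfolding critical_sol_def max_sol_def nls_sol_def s_def by auto
  have int: "\<And>t. t \<in> I \<Longrightarrow> integrable lborel (hs_density s (u t))"
    by (rule hs_mem_imp_integrable_hs_density[OF hs_mem])
  obtain B where B: "\<And>t. t \<in> I \<Longrightarrow> hs_norm s (u t) \<le> B"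
    using bdd unfolding s_def by blast
  obtain K where K: "\<And>\<xi>. \<bar>\<phi> \<xi>\<bar> \<le> K"
    using smooth_fun_bounded[OF \<phi>_smooth] \<phi>_supp by blast
  have C_pos: "\<And>\<eta>. 0 < \<eta> \<Longrightarrow> 0 \<le> C \<eta>"
    using ap unfolding almost_periodic_def by (simp add: less_imp_le)
  have tail: "\<And>\<eta> t. 0 < \<eta> \<Longrightarrow> t \<in> I \<Longrightarrow> (LINT \<xi>:{\<xi>. C \<eta> \<le> norm \<xi>}|lborel. hs_density s (u t) \<xi>) \<le> \<eta>"
    using almost_periodic_freq_tail_le[OF ap[folded s_def]] N_le int by blast
  show "((\<lambda>M. (SUP t\<in>I. mult_norm (crit_reg TYPE('n) p) (\<lambda>\<xi>. 1 - \<phi> ((1 / M) *\<^sub>R \<xi>)) (u t))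
      + (1 / M powr \<theta>) * (SUP t\<in>I. mult_norm (\<theta> + crit_reg TYPE('n) p) (\<lambda>\<xi>. \<phi> ((1 / M) *\<^sub>R \<xi>)) (u t)))
      \<longlongrightarrow> 0) at_top"
    unfolding s_def[symmetric]
    using tendsto_add[OF high_freq_SUP_tendsto_0[where f = u and \<phi> = \<phi> and K = K and R = C, OF I int K \<phi>_one tail]
        low_freq_SUP_tendsto_0[where f = u and \<phi> = \<phi> and K = K and \<rho> = "11/10" and R = C, OF I int B K \<phi>_supp \<theta> C_pos tail]]
    by simp
qed

end
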